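(* Let $A$ be a partial ring and $\mathfrak{a}$ an ideal of $A$. Put $\sqrt{\mathfrak a}=\{a\in A:\exists r\in\mathbb{N},\ a^r\in\mathfrak a\}$. Then $\sqrt{\mathfrak a}=\bigcap_{\mathfrak p\in X_A,\ \mathfrak a\subseteq\mathfrak p}\mathfrak p$.
   Context: A partial ring is a set $A$ with $0$, a set $A_2\subseteq A\times A$ of summable pairs and a partial addition ($0$ a unit summable with everything; commutative; associative in the sense: $(a,b),(a+b,c)\in A_2$ iff $(b,c),(a,b+c)\in A_2$, and then $(a+b)+c=a+(b+c)$), with a commutative associative multiplication with unit $1$ such that $0\cdot a=0$ and $(a_1,a_2)\in A_2\Rightarrow(a_1x,a_2x)\in A_2$, $(a_1+a_2)x=a_1x+a_2x$. An ideal is a subset $I\ni 0$ with $a+b\in I$ whenever $a,b\in I$ and $(a,b)\in A_2$, and $AI\subseteq I$. A prime ideal is an ideal $\mathfrak p\neq A$ such that $xy\in\mathfrak p$ implies $x\in\mathfrak p$ or $y\in\mathfrak p$. $X_A$ is the set of prime ideals of $A$. (An empty intersection is $A$.) *)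

theory Defs
  imports Main
begin

text \<open>A partial ring: carrier A, zero z, unit u, summable pairs S, partial addition add,
  multiplication mul. Operations are only meaningful on the carrier (and add on S).\<close>

definition partial_ring ::
  "'a set \<Rightarrow> 'a \<Rightarrow> 'a \<Rightarrow> ('a \<times> 'a) set \<Rightarrow> ('a \<Rightarrow> 'a \<Rightarrow> 'a) \<Rightarrow> ('a \<Rightarrow> 'a \<Rightarrow> 'a) \<Rightarrow> bool"
where
  "partial_ring A z u S add mul \<longleftrightarrow>
     z \<in> A \<and> u \<in> A \<and> S \<subseteq> A \<times> A \<and>
     (\<forall>a b. (a, b) \<in> S \<longrightarrow> add a b \<in> A) \<and>
     (\<forall>a\<in>A. (a, z) \<in> S \<and> add a z = a) \<and>
     (\<forall>a b. (a, b) \<in> S \<longrightarrow> (b, a) \<in> S \<and> add a b = add b a) \<and>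
     (\<forall>a\<in>A. \<forall>b\<in>A. \<forall>c\<in>A.
        (((a, b) \<in> S \<and> (add a b, c) \<in> S) \<longleftrightarrow> ((b, c) \<in> S \<and> (a, add b c) \<in> S)) \<and>
        ((a, b) \<in> S \<and> (add a b, c) \<in> S \<longrightarrow> add (add a b) c = add a (add b c))) \<and>
     (\<forall>a\<in>A. \<forall>b\<in>A. mul a b \<in> A) \<and>
     (\<forall>a\<in>A. \<forall>b\<in>A. mul a b = mul b a) \<and>
     (\<forall>a\<in>A. \<forall>b\<in>A. \<forall>c\<in>A. mul (mul a b) c = mul a (mul b c)) \<and>
     (\<forall>a\<in>A. mul u a = a) \<and>
     (\<forall>a\<in>A. mul z a = z) \<and>
     (\<forall>a1 a2 x. (a1, a2) \<in> S \<and> x \<in> A \<longrightarrow>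
        (mul a1 x, mul a2 x) \<in> S \<and> mul (add a1 a2) x = add (mul a1 x) (mul a2 x))"

definition pr_ideal ::
  "'a set \<Rightarrow> 'a \<Rightarrow> ('a \<times> 'a) set \<Rightarrow> ('a \<Rightarrow> 'a \<Rightarrow> 'a) \<Rightarrow> ('a \<Rightarrow> 'a \<Rightarrow> 'a) \<Rightarrow> 'a set \<Rightarrow> bool"
where
  "pr_ideal A z S add mul I \<longleftrightarrow>
     I \<subseteq> A \<and> z \<in> I \<and>
     (\<forall>a\<in>I. \<forall>b\<in>I. (a, b) \<in> S \<longrightarrow> add a b \<in> I) \<and>
     (\<forall>x\<in>A. \<forall>a\<in>I. mul x a \<in> I)"

definition pr_prime ::
  "'a set \<Rightarrow> 'a \<Rightarrow> ('a \<times> 'a) set \<Rightarrow> ('a \<Rightarrow> 'a \<Rightarrow> 'a) \<Rightarrow> ('a \<Rightarrow> 'a \<Rightarrow> 'a) \<Rightarrow> 'a set \<Rightarrow> bool"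
where
  "pr_prime A z S add mul P \<longleftrightarrow>
     pr_ideal A z S add mul P \<and> P \<noteq> A \<and>
     (\<forall>x\<in>A. \<forall>y\<in>A. mul x y \<in> P \<longrightarrow> x \<in> P \<or> y \<in> P)"

definition pr_pow :: "'a \<Rightarrow> ('a \<Rightarrow> 'a \<Rightarrow> 'a) \<Rightarrow> 'a \<Rightarrow> nat \<Rightarrow> 'a" where
  "pr_pow u mul a n = (mul a ^^ n) u"

end

theory Submission
  imports Defs
begin

(* A prime containing I contains every element having a power in I.  Conversely, if no
   power of a lies in I, Zorn's lemma yields an ideal P \<supseteq> I maximal among the ideals
   avoiding the powers of a.  Such a P is prime: if x y \<in> P with x, y \<notin> P, then the colon
   ideal (P : y) properly contains P, so it meets some a^m; but (P : a^m) still avoids the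
   powers of a, so by maximality it equals P, and it contains y.  Hence a \<notin> P. *)

locale pring =
  fixes A :: "'a set" and z u :: 'a and S :: "('a \<times> 'a) set"
    and add mul :: "'a \<Rightarrow> 'a \<Rightarrow> 'a"
  assumes partial_ring: "partial_ring A z u S add mul"
begin

abbreviation ideal :: "'a set \<Rightarrow> bool" where
  "ideal \<equiv> pr_ideal A z S add mul"

abbreviation prime :: "'a set \<Rightarrow> bool" where
  "prime \<equiv> pr_prime A z S add mul"

abbreviation pow :: "'a \<Rightarrow> nat \<Rightarrow> 'a" where
  "pow \<equiv> pr_pow u mul"

definition colon :: "'a set \<Rightarrow> 'a \<Rightarrow> 'a set" where
  "colon P c = {b \<in> A. mul c b \<in> P}"

definition avoids_powers :: "'a \<Rightarrow> 'a set \<Rightarrow> bool" where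
  "avoids_powers a Q \<longleftrightarrow> (\<forall>r. pow a r \<notin> Q)"

(* Projected by hand: automation on the unfolded definition gets lost in its associativity
   clause for the partial addition. *)
lemma partial_ring_conjuncts:
  "z \<in> A" "u \<in> A"
  "\<forall>a b. (a, b) \<in> S \<longrightarrow> add a b \<in> A"
  "\<forall>a\<in>A. \<forall>b\<in>A. mul a b \<in> A"
  "\<forall>a\<in>A. \<forall>b\<in>A. mul a b = mul b a"
  "\<forall>a\<in>A. \<forall>b\<in>A. \<forall>c\<in>A. mul (mul a b) c = mul a (mul b c)"
  "\<forall>a\<in>A. mul u a = a"
  "\<forall>a\<in>A. mul z a = z"
  "\<forall>a b x. (a, b) \<in> S \<and> x \<in> A \<longrightarrow>
     (mul a x, mul b x) \<in> S \<and> mul (add a b) x = add (mul a x) (mul b x)"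
  using partial_ring unfolding partial_ring_def by - (elim conjE, assumption)+

lemma zero_closed: "z \<in> A"
  and one_closed: "u \<in> A"
  using partial_ring_conjuncts(1,2) .

lemma add_closed: "(a, b) \<in> S \<Longrightarrow> add a b \<in> A"
  using partial_ring_conjuncts(3) by blast

lemma mul_closed: "a \<in> A \<Longrightarrow> b \<in> A \<Longrightarrow> mul a b \<in> A"
  using partial_ring_conjuncts(4) by blast

lemma mul_commute: "a \<in> A \<Longrightarrow> b \<in> A \<Longrightarrow> mul a b = mul b a"
  using partial_ring_conjuncts(5) by blast

lemma mul_assoc: "a \<in> A \<Longrightarrow> b \<in> A \<Longrightarrow> c \<in> A \<Longrightarrow> mul (mul a b) c = mul a (mul b c)"
  using partial_ring_conjuncts(6) by blast

lemma mul_one_left: "a \<in> A \<Longrightarrow> mul u a = a"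
  using partial_ring_conjuncts(7) by blast

lemma mul_zero_left: "a \<in> A \<Longrightarrow> mul z a = z"
  using partial_ring_conjuncts(8) by blast

lemma summable_mul_right: "(a, b) \<in> S \<Longrightarrow> x \<in> A \<Longrightarrow> (mul a x, mul b x) \<in> S"
  and distrib_right: "(a, b) \<in> S \<Longrightarrow> x \<in> A \<Longrightarrow> mul (add a b) x = add (mul a x) (mul b x)"
  using partial_ring_conjuncts(9) by blast+

lemma mul_one_right: "a \<in> A \<Longrightarrow> mul a u = a"
  using mul_commute mul_one_left one_closed by simp

lemma mul_zero_right: "a \<in> A \<Longrightarrow> mul a z = z"
  using mul_commute mul_zero_left zero_closed by simp

lemma mul_left_commute: "a \<in> A \<Longrightarrow> b \<in> A \<Longrightarrow> c \<in> A \<Longrightarrow> mul a (mul b c) = mul b (mul a c)"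
  by (metis mul_assoc mul_commute)

lemma pow_0 [simp]: "pow a 0 = u"
  and pow_Suc: "pow a (Suc n) = mul a (pow a n)"
  by (simp_all add: pr_pow_def)

lemma pow_1: "a \<in> A \<Longrightarrow> pow a 1 = a"
  by (simp add: pow_Suc mul_one_right)

lemma pow_closed: "a \<in> A \<Longrightarrow> pow a n \<in> A"
  by (induction n) (simp_all add: pow_Suc one_closed mul_closed)

lemma pow_add: "a \<in> A \<Longrightarrow> pow a (m + n) = mul (pow a m) (pow a n)"
  by (induction m) (simp_all add: pow_Suc mul_one_left mul_assoc pow_closed)

lemma ideal_subset: "ideal I \<Longrightarrow> I \<subseteq> A"
  and ideal_zero: "ideal I \<Longrightarrow> z \<in> I"
  and ideal_add: "ideal I \<Longrightarrow> a \<in> I \<Longrightarrow> b \<in> I \<Longrightarrow> (a, b) \<in> S \<Longrightarrow> add a b \<in> I"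
  and ideal_mul: "ideal I \<Longrightarrow> x \<in> A \<Longrightarrow> a \<in> I \<Longrightarrow> mul x a \<in> I"
  unfolding pr_ideal_def by blast+

lemma ideal_eq_carrier_if_one_mem:
  assumes "ideal I" "u \<in> I"
  shows "I = A"
  using assms ideal_subset ideal_mul[OF assms(1) _ assms(2)] mul_one_right by auto

lemma prime_mem_if_pow_mem:
  assumes "prime P" "a \<in> A" "pow a r \<in> P"
  shows "a \<in> P"
  using assms(3)
proof (induction r)
  case 0
  with assms(1) ideal_eq_carrier_if_one_mem show ?case
    unfolding pr_prime_def by auto
next
  case (Suc r)
  with assms(1,2) pow_closed show ?case
    unfolding pr_prime_def by (auto simp: pow_Suc)
qed

lemma subset_colon:
  assumes "ideal P" "c \<in> A"
  shows "P \<subseteq> colon P c"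
  using assms ideal_subset ideal_mul unfolding colon_def by blast

lemma ideal_colon:
  assumes P: "ideal P" and c: "c \<in> A"
  shows "ideal (colon P c)"
  unfolding pr_ideal_def
proof (intro conjI ballI impI)
  show "colon P c \<subseteq> A"
    by (auto simp: colon_def)
  show "z \<in> colon P c"
    using P c zero_closed ideal_zero mul_zero_right by (simp add: colon_def)
next
  fix a b assume "a \<in> colon P c" "b \<in> colon P c" and ab: "(a, b) \<in> S"
  then have "mul c a \<in> P" "mul c b \<in> P" and "a \<in> A" "b \<in> A"
    by (auto simp: colon_def)
  moreover have "mul c (add a b) = add (mul c a) (mul c b)"
  proof -
    have "mul c (add a b) = mul (add a b) c"
      using ab c add_closed mul_commute by blast
    also have "\<dots> = add (mul a c) (mul b c)"
      using ab c distrib_right by blast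
    finally show ?thesis
      using c \<open>a \<in> A\<close> \<open>b \<in> A\<close> mul_commute by simp
  qed
  moreover have "(mul c a, mul c b) \<in> S"
    using summable_mul_right[OF ab c] c \<open>a \<in> A\<close> \<open>b \<in> A\<close> mul_commute by simp
  ultimately show "add a b \<in> colon P c"
    using P ab by (simp add: colon_def add_closed ideal_add)
next
  fix x b assume "x \<in> A" "b \<in> colon P c"
  then have "b \<in> A" "mul c b \<in> P"
    by (auto simp: colon_def)
  with \<open>x \<in> A\<close> show "mul x b \<in> colon P c"
    using P c by (simp add: colon_def mul_closed mul_left_commute[of c x b] ideal_mul)
qed

lemma ideal_Union_chain:
  assumes "C \<noteq> {}" "subset.chain {Q. ideal Q} C"
  shows "ideal (\<Union>C)"
  unfolding pr_ideal_def
proof (intro conjI ballI impI)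
  have ideals: "\<And>Q. Q \<in> C \<Longrightarrow> ideal Q"
    using assms(2) unfolding subset.chain_def by blast
  then show "\<Union>C \<subseteq> A" "z \<in> \<Union>C"
    using assms(1) ideal_subset ideal_zero by blast+
  show "mul x b \<in> \<Union>C" if "x \<in> A" "b \<in> \<Union>C" for x b
    using that ideals ideal_mul by blast
  fix a b assume "a \<in> \<Union>C" "b \<in> \<Union>C" "(a, b) \<in> S"
  moreover obtain X Y where "X \<in> C" "Y \<in> C" "a \<in> X" "b \<in> Y"
    using \<open>a \<in> \<Union>C\<close> \<open>b \<in> \<Union>C\<close> by blast
  moreover have "X \<subseteq> Y \<or> Y \<subseteq> X"
    using assms(2) \<open>X \<in> C\<close> \<open>Y \<in> C\<close> unfolding subset.chain_def by blast
  ultimately show "add a b \<in> \<Union>C"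
    using ideals ideal_add by (metis UnionI subsetD)
qed

lemma exists_maximal_ideal_avoiding_powers:
  assumes "ideal I" "avoids_powers a I"
  obtains P where "ideal P" "I \<subseteq> P" "avoids_powers a P"
    and "\<And>Q. ideal Q \<Longrightarrow> P \<subseteq> Q \<Longrightarrow> avoids_powers a Q \<Longrightarrow> Q = P"
proof -
  define F where "F = {Q. ideal Q \<and> I \<subseteq> Q \<and> avoids_powers a Q}"
  have "\<Union>C \<in> F" if "C \<noteq> {}" "subset.chain F C" for C
  proof -
    have "C \<subseteq> F" "subset.chain {Q. ideal Q} C"
      using that(2) unfolding subset.chain_def F_def by blast+
    then have "ideal (\<Union>C)"
      using ideal_Union_chain that(1) by blast
    moreover have "I \<subseteq> \<Union>C" "avoids_powers a (\<Union>C)"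
      using \<open>C \<subseteq> F\<close> that(1) unfolding F_def avoids_powers_def by blast+
    ultimately show ?thesis
      unfolding F_def by blast
  qed
  moreover have "I \<in> F"
    using assms unfolding F_def by blast
  ultimately obtain P where "P \<in> F" and maximal: "\<And>Q. Q \<in> F \<Longrightarrow> P \<subseteq> Q \<Longrightarrow> Q = P"
    using subset_Zorn_nonempty[of F] by (metis empty_iff)
  show thesis
  proof (rule that)
    show "ideal P" "I \<subseteq> P" "avoids_powers a P"
      using \<open>P \<in> F\<close> unfolding F_def by blast+
    show "Q = P" if "ideal Q" "P \<subseteq> Q" "avoids_powers a Q" for Q
      using maximal[of Q] that \<open>I \<subseteq> P\<close> unfolding F_def by blast
  qed
qed

lemma prime_if_maximal_avoiding_powers:
  assumes a: "a \<in> A" and P: "ideal P" "avoids_powers a P"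
    and maximal: "\<And>Q. ideal Q \<Longrightarrow> P \<subseteq> Q \<Longrightarrow> avoids_powers a Q \<Longrightarrow> Q = P"
  shows "prime P"
  unfolding pr_prime_def
proof (intro conjI ballI impI)
  show "ideal P" by fact
  show "P \<noteq> A"
    using P(2) one_closed pow_0 unfolding avoids_powers_def by metis
  have colon_eq: "colon P c = P" if "c \<in> A" "avoids_powers a (colon P c)" for c
    using maximal ideal_colon subset_colon P(1) that by blast
  fix x y assume x: "x \<in> A" and y: "y \<in> A" and "mul x y \<in> P"
  show "x \<in> P \<or> y \<in> P"
  proof (rule ccontr)
    assume "\<not> (x \<in> P \<or> y \<in> P)"
    moreover have "x \<in> colon P y"
      using x y \<open>mul x y \<in> P\<close> by (simp add: colon_def mul_commute)
    ultimately obtain m where m: "mul y (pow a m) \<in> P"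
      using colon_eq[OF y] unfolding avoids_powers_def colon_def by blast
    have "avoids_powers a (colon P (pow a m))"
      using P(2) a by (simp add: avoids_powers_def colon_def pow_add[symmetric])
    then have "colon P (pow a m) = P"
      using colon_eq a pow_closed by blast
    moreover have "y \<in> colon P (pow a m)"
      using m a y pow_closed by (simp add: colon_def mul_commute)
    ultimately show False
      using \<open>\<not> (x \<in> P \<or> y \<in> P)\<close> by blast
  qed
qed

lemma radical_eq_Inter_primes:
  assumes I: "ideal I"
  shows "{a \<in> A. \<exists>r. pow a r \<in> I} = A \<inter> \<Inter> {P. prime P \<and> I \<subseteq> P}"
proof (intro equalityI subsetI)
  fix a assume "a \<in> {a \<in> A. \<exists>r. pow a r \<in> I}"
  then obtain r where "a \<in> A" "pow a r \<in> I"
    by blast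
  then show "a \<in> A \<inter> \<Inter> {P. prime P \<and> I \<subseteq> P}"
    using prime_mem_if_pow_mem by blast
next
  fix a assume a: "a \<in> A \<inter> \<Inter> {P. prime P \<and> I \<subseteq> P}"
  show "a \<in> {a \<in> A. \<exists>r. pow a r \<in> I}"
  proof (rule ccontr)
    assume "a \<notin> {a \<in> A. \<exists>r. pow a r \<in> I}"
    with a have "avoids_powers a I"
      unfolding avoids_powers_def by blast
    with I obtain P where P: "ideal P" "I \<subseteq> P" "avoids_powers a P"
      and "\<And>Q. ideal Q \<Longrightarrow> P \<subseteq> Q \<Longrightarrow> avoids_powers a Q \<Longrightarrow> Q = P"
      by (rule exists_maximal_ideal_avoiding_powers) blast
    with a have "prime P"
      using prime_if_maximal_avoiding_powers by blast
    with a P(2) have "pow a 1 \<in> P"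
      using pow_1 by auto
    with P(3) show False
      unfolding avoids_powers_def by blast
  qed
qed

end

theorem mainTheorem19:
  assumes "partial_ring A z u S add mul"
    and "pr_ideal A z S add mul I"
  shows "{a \<in> A. \<exists>r::nat. pr_pow u mul a r \<in> I}
       = A \<inter> \<Inter> {P. pr_prime A z S add mul P \<and> I \<subseteq> P}"
  using pring.radical_eq_Inter_primes[OF pring.intro, OF assms] .

end
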